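(* Let $\Sigma$ be an infinite alphabet and let $\mathcal{F}$ be a finite automaton over $\Sigma$ (finitely many states and finitely many transitions, each labelled by a letter of $\Sigma$). Then there exists a GVA $\mathcal{A}$ over $\Sigma$ such that $L(\mathcal{A})=\Sigma^{\star}\setminus L(\mathcal{F})$. That is, the complement of a regular language over $\Sigma$ is GVA-recognizable.
   Context: Fix an infinite alphabet $\Sigma$. A guard over a set of variables $\mathcal{X}$ (disjoint from $\Sigma$) is built by the grammar $g ::= \mathit{true} \mid \alpha=\beta \mid \alpha\neq\beta \mid g\wedge g$ with $\alpha,\beta\in\Sigma\cup\mathcal{X}$. A GVA is a tuple $\mathcal{A}=\langle\Sigma,\mathcal{X},Q,Q_0,\delta,F,\kappa\rangle$ where $\mathcal{X}$ is a finite set of variables, $Q$ a finite set of states, $Q_0\subseteq Q$ the initial states, $F\subseteq Q$ the accepting states, $\delta$ a finite set of transitions $q\xrightarrow{\alpha,g}q'$ with $q,q'\in Q$, $\alpha\in\Sigma\cup\mathcal{X}\cup\{\varepsilon\}$ and $g$ a guard, and $\kappa:\mathcal{X}\to 2^{Q}$ the refreshing function ($\kappa(x)$ is the set of states in which $x$ is freed). A configuration is a pair $(\sigma,q)$ with $q\in Q$ and $\sigma$ a partial map $\mathcal{X}\to\Sigma$. There is a step $(\sigma,q)\xrightarrow{a}(\sigma',q')$, $a\in\Sigma\cup\{\varepsilon\}$, if there is a transition $q\xrightarrow{\alpha,g}q'$ and a map $\gamma$ from the variables occurring in $\alpha$ or $g$ that are not in $\mathrm{dom}(\sigma)$ to $\Sigma$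 such that, with $\rho=\sigma\uplus\gamma$ (extended to be the identity on letters), $\rho$ satisfies $g$, $a=\rho(\alpha)$ if $\alpha\neq\varepsilon$ and $a=\varepsilon$ if $\alpha=\varepsilon$, and $\sigma'$ is the restriction of $\rho$ to $\{x\in\mathrm{dom}(\rho) : q'\notin\kappa(x)\}$. A word $w\in\Sigma^{\star}$ is accepted if there is a sequence of steps from $(\emptyset,q_0)$ with $q_0\in Q_0$ to some $(\sigma,q_f)$ with $q_f\in F$ whose labels concatenate to $w$; $L(\mathcal{A})$ is the set of accepted words. *)

theory Defs
  imports Main
begin

text \<open>Letters and variables: the alphabet is a type 's, variables a type 'x;
  the datatype below keeps them disjoint (Sigma union X).\<close>
datatype ('s,'x) sym = Let 's | Var 'x

datatype ('s,'x) guard =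
    GTrue
  | GEq "('s,'x) sym" "('s,'x) sym"
  | GNeq "('s,'x) sym" "('s,'x) sym"
  | GAnd "('s,'x) guard" "('s,'x) guard"

fun sym_vars :: "('s,'x) sym \<Rightarrow> 'x set" where
  "sym_vars (Let a) = {}"
| "sym_vars (Var x) = {x}"

fun guard_vars :: "('s,'x) guard \<Rightarrow> 'x set" where
  "guard_vars GTrue = {}"
| "guard_vars (GEq a b) = sym_vars a \<union> sym_vars b"
| "guard_vars (GNeq a b) = sym_vars a \<union> sym_vars b"
| "guard_vars (GAnd g h) = guard_vars g \<union> guard_vars h"

text \<open>Transition label: None = epsilon.\<close>
definition lbl_vars :: "('s,'x) sym option \<Rightarrow> 'x set" where
  "lbl_vars al = (case al of None \<Rightarrow> {} | Some a \<Rightarrow> sym_vars a)"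

fun sym_eval :: "('x \<Rightarrow> 's) \<Rightarrow> ('s,'x) sym \<Rightarrow> 's" where
  "sym_eval v (Let a) = a"
| "sym_eval v (Var x) = v x"

fun guard_sat :: "('x \<Rightarrow> 's) \<Rightarrow> ('s,'x) guard \<Rightarrow> bool" where
  "guard_sat v GTrue = True"
| "guard_sat v (GEq a b) = (sym_eval v a = sym_eval v b)"
| "guard_sat v (GNeq a b) = (sym_eval v a \<noteq> sym_eval v b)"
| "guard_sat v (GAnd g h) = (guard_sat v g \<and> guard_sat v h)"

record ('s,'x,'q) gva =
  gX     :: "'x set"
  gQ     :: "'q set"
  gQ0    :: "'q set"
  gDelta :: "('q \<times> ('s,'x) sym option \<times> ('s,'x) guard \<times> 'q) set"
  gF     :: "'q set"
  gKappa :: "'x \<Rightarrow> 'q set"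

definition is_gva :: "('s,'x,'q) gva \<Rightarrow> bool" where
  "is_gva A \<longleftrightarrow> finite (gX A) \<and> finite (gQ A) \<and> gQ0 A \<subseteq> gQ A \<and> gF A \<subseteq> gQ A
     \<and> finite (gDelta A)
     \<and> (\<forall>(q,al,g,q') \<in> gDelta A. q \<in> gQ A \<and> q' \<in> gQ A
            \<and> lbl_vars al \<subseteq> gX A \<and> guard_vars g \<subseteq> gX A)
     \<and> (\<forall>x \<in> gX A. gKappa A x \<subseteq> gQ A)"

text \<open>One step (sigma,q) --a--> (sigma',q'), a = None meaning epsilon.
  gamma is a map on exactly the variables of alpha and g outside dom sigma;
  rho = sigma ++ gamma (total version obtained by applying `the`, only used on dom rho).\<close>
definition gva_step :: "('s,'x,'q) gva \<Rightarrow> ('x \<rightharpoonup> 's) \<times> 'q \<Rightarrow> 's option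
      \<Rightarrow> ('x \<rightharpoonup> 's) \<times> 'q \<Rightarrow> bool" where
  "gva_step A c a c' \<longleftrightarrow> (case c of (\<sigma>, q) \<Rightarrow> case c' of (\<sigma>', q') \<Rightarrow>
     (\<exists>al g \<gamma>. (q, al, g, q') \<in> gDelta A
        \<and> dom \<gamma> = (lbl_vars al \<union> guard_vars g) - dom \<sigma>
        \<and> (let \<rho> = \<sigma> ++ \<gamma>; v = (\<lambda>x. the (\<rho> x)) in
             guard_sat v g
           \<and> a = map_option (sym_eval v) al
           \<and> \<sigma>' = \<rho> |` {x \<in> dom \<rho>. q' \<notin> gKappa A x})))"

inductive gva_run :: "('s,'x,'q) gva \<Rightarrow> ('x \<rightharpoonup> 's) \<times> 'q \<Rightarrow> 's list
      \<Rightarrow> ('x \<rightharpoonup> 's) \<times> 'q \<Rightarrow> bool" for A where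
  run_refl: "gva_run A c [] c"
| run_step: "gva_step A c a c' \<Longrightarrow> gva_run A c' w c''
     \<Longrightarrow> gva_run A c ((case a of None \<Rightarrow> [] | Some b \<Rightarrow> [b]) @ w) c''"

definition gva_lang :: "('s,'x,'q) gva \<Rightarrow> 's list set" where
  "gva_lang A = {w. \<exists>q0 \<in> gQ0 A. \<exists>\<sigma> qf. qf \<in> gF A
                   \<and> gva_run A (Map.empty, q0) w (\<sigma>, qf)}"

record ('s,'q) fa =
  fQ     :: "'q set"
  fQ0    :: "'q set"
  fDelta :: "('q \<times> 's \<times> 'q) set"
  fF     :: "'q set"

definition is_fa :: "('s,'q) fa \<Rightarrow> bool" where
  "is_fa M \<longleftrightarrow> finite (fQ M) \<and> finite (fDelta M) \<and> fQ0 M \<subseteq> fQ M \<and> fF M \<subseteq> fQ M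
     \<and> (\<forall>(q,a,q') \<in> fDelta M. q \<in> fQ M \<and> q' \<in> fQ M)"

inductive fa_run :: "('s,'q) fa \<Rightarrow> 'q \<Rightarrow> 's list \<Rightarrow> 'q \<Rightarrow> bool" for M where
  fa_refl: "fa_run M q [] q"
| fa_step: "(q, a, q') \<in> fDelta M \<Longrightarrow> fa_run M q' w q'' \<Longrightarrow> fa_run M q (a # w) q''"

definition fa_lang :: "('s,'q) fa \<Rightarrow> 's list set" where
  "fa_lang M = {w. \<exists>q0 \<in> fQ0 M. \<exists>qf \<in> fF M. fa_run M q0 w qf}"

end

theory Submission
  imports Defs
begin

text \<open>Determinise the finite automaton by the subset construction and complement the set of
  accepting subsets. The resulting DFA only reads the finitely many letters occurring in
  transitions of the automaton; every other letter is handled by one extra transition per subset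
  that binds a variable to the letter, guarded by disequalities with all known letters, and leads
  to the empty subset. Since the variable is freed in every state, no valuation ever survives a
  step, so the GVA behaves exactly like the complemented DFA.\<close>

definition fa_succs :: "('s,'q) fa \<Rightarrow> 'q set \<Rightarrow> 's \<Rightarrow> 'q set" where
  "fa_succs M S c = {q'. \<exists>q\<in>S. (q, c, q') \<in> fDelta M}"

fun fa_reach :: "('s,'q) fa \<Rightarrow> 'q set \<Rightarrow> 's list \<Rightarrow> 'q set" where
  "fa_reach M S [] = S"
| "fa_reach M S (c # w) = fa_reach M (fa_succs M S c) w"

definition fa_letters :: "('s,'q) fa \<Rightarrow> 's set" where
  "fa_letters M = {c. \<exists>q q'. (q, c, q') \<in> fDelta M}"

lemma fa_run_Nil_iff: "fa_run M q [] q' \<longleftrightarrow> q = q'"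
  by (auto elim: fa_run.cases intro: fa_run.intros)

lemma fa_run_Cons_iff: "fa_run M q (c # w) q'' \<longleftrightarrow> (\<exists>q'. (q, c, q') \<in> fDelta M \<and> fa_run M q' w q'')"
  by (auto elim: fa_run.cases intro: fa_run.intros)

lemma fa_reach_iff_run: "q' \<in> fa_reach M S w \<longleftrightarrow> (\<exists>q\<in>S. fa_run M q w q')"
  by (induction w arbitrary: S) (auto simp: fa_run_Nil_iff fa_run_Cons_iff fa_succs_def)

lemma fa_lang_iff_reach: "w \<in> fa_lang M \<longleftrightarrow> fa_reach M (fQ0 M) w \<inter> fF M \<noteq> {}"
  by (auto simp: fa_lang_def disjoint_iff fa_reach_iff_run)

lemma fa_succs_subset: "is_fa M \<Longrightarrow> fa_succs M S c \<subseteq> fQ M"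
  unfolding is_fa_def fa_succs_def by fastforce

lemma fa_reach_subset: "is_fa M \<Longrightarrow> S \<subseteq> fQ M \<Longrightarrow> fa_reach M S w \<subseteq> fQ M"
  by (induction w arbitrary: S) (auto simp: fa_succs_subset)

lemma fa_succs_notin_letters: "c \<notin> fa_letters M \<Longrightarrow> fa_succs M S c = {}"
  unfolding fa_succs_def fa_letters_def by auto

lemma finite_fa_letters:
  assumes "is_fa M"
  shows "finite (fa_letters M)"
proof -
  have "fa_letters M = (\<lambda>(q, c, q'). c) ` fDelta M"
    unfolding fa_letters_def by force
  then show ?thesis
    using assms by (simp add: is_fa_def)
qed

definition avoid_guard :: "'s list \<Rightarrow> ('s,nat) guard" where
  "avoid_guard cs = foldr (\<lambda>c g. GAnd (GNeq (Var 0) (Let c)) g) cs GTrue"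

lemma guard_sat_avoid_guard: "guard_sat v (avoid_guard cs) \<longleftrightarrow> v 0 \<notin> set cs"
  by (induction cs) (auto simp: avoid_guard_def)

lemma guard_vars_avoid_guard: "guard_vars (avoid_guard cs) \<subseteq> {0}"
  by (induction cs) (auto simp: avoid_guard_def)

lemma gva_stepI:
  assumes "(q, al, g, q') \<in> gDelta A"
    and "dom \<gamma> = lbl_vars al \<union> guard_vars g - dom \<sigma>"
    and "guard_sat (\<lambda>x. the ((\<sigma> ++ \<gamma>) x)) g"
    and "a = map_option (sym_eval (\<lambda>x. the ((\<sigma> ++ \<gamma>) x))) al"
    and "\<sigma>' = (\<sigma> ++ \<gamma>) |` {x \<in> dom (\<sigma> ++ \<gamma>). q' \<notin> gKappa A x}"
  shows "gva_step A (\<sigma>, q) a (\<sigma>', q')"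
  using assms unfolding gva_step_def Let_def by blast

definition complement_gva ::
    "('s,'q) fa \<Rightarrow> ('q set \<Rightarrow> nat) \<Rightarrow> 's list \<Rightarrow> ('s,nat,nat) gva" where
  "complement_gva M enc cs = \<lparr> gX = {0}, gQ = enc ` Pow (fQ M), gQ0 = {enc (fQ0 M)},
     gDelta = (\<lambda>(S, c). (enc S, Some (Let c), GTrue, enc (fa_succs M S c))) ` (Pow (fQ M) \<times> set cs)
        \<union> (\<lambda>S. (enc S, Some (Var 0), avoid_guard cs, enc {})) ` Pow (fQ M),
     gF = enc ` {S. S \<subseteq> fQ M \<and> S \<inter> fF M = {}},
     gKappa = \<lambda>_. enc ` Pow (fQ M) \<rparr>"

locale complement_construction =
  fixes M :: "('s,'q) fa" and enc :: "'q set \<Rightarrow> nat" and cs :: "'s list"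
  assumes is_fa: "is_fa M"
    and inj_enc: "inj_on enc (Pow (fQ M))"
    and set_cs: "set cs = fa_letters M"
begin

abbreviation A :: "('s,nat,nat) gva" where
  "A \<equiv> complement_gva M enc cs"

lemma is_gva: "is_gva A"
  using fa_succs_subset[OF is_fa] guard_vars_avoid_guard[of cs] is_fa
  by (auto simp: is_gva_def complement_gva_def lbl_vars_def is_fa_def)

lemma enc_eq_iff: "S \<subseteq> fQ M \<Longrightarrow> T \<subseteq> fQ M \<Longrightarrow> enc S = enc T \<longleftrightarrow> S = T"
  using inj_enc by (auto dest: inj_onD)

lemma gva_step_from_empty:
  assumes "S \<subseteq> fQ M" and "gva_step A (Map.empty, enc S) a (\<sigma>', q')"
  shows "\<exists>c. a = Some c \<and> q' = enc (fa_succs M S c) \<and> \<sigma>' = Map.empty"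
proof -
  obtain al g \<gamma> where tr: "(enc S, al, g, q') \<in> gDelta A"
    and sat: "guard_sat (\<lambda>x. the (\<gamma> x)) g"
    and a: "a = map_option (sym_eval (\<lambda>x. the (\<gamma> x))) al"
    and \<sigma>': "\<sigma>' = \<gamma> |` {x \<in> dom \<gamma>. q' \<notin> gKappa A x}"
    using assms(2) unfolding gva_step_def by (auto simp: Let_def)
  have "q' \<in> enc ` Pow (fQ M)"
    using tr fa_succs_subset[OF is_fa] by (auto simp: complement_gva_def)
  then have "\<sigma>' = Map.empty"
    using \<sigma>' by (auto simp: complement_gva_def)
  moreover from tr consider
      (letter) T c where "T \<subseteq> fQ M" "enc S = enc T" "al = Some (Let c)" "q' = enc (fa_succs M T c)"
    | (fresh) T where "T \<subseteq> fQ M" "enc S = enc T" "al = Some (Var 0)" "g = avoid_guard cs"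
        "q' = enc {}"
    by (auto simp: complement_gva_def)
  then have "\<exists>c. a = Some c \<and> q' = enc (fa_succs M S c)"
  proof cases
    case letter
    then show ?thesis using a enc_eq_iff[OF assms(1)] by auto
  next
    case fresh
    then have "the (\<gamma> 0) \<notin> fa_letters M"
      using sat set_cs by (simp add: guard_sat_avoid_guard)
    then show ?thesis using fresh a by (simp add: fa_succs_notin_letters)
  qed
  ultimately show ?thesis by blast
qed

lemma gva_step_letter:
  assumes S: "S \<subseteq> fQ M"
  shows "gva_step A (Map.empty, enc S) (Some c) (Map.empty, enc (fa_succs M S c))"
proof (cases "c \<in> set cs")
  case True
  then have "(enc S, Some (Let c), GTrue, enc (fa_succs M S c)) \<in> gDelta A"
    using S by (auto simp: complement_gva_def)
  then show ?thesis
    by (rule gva_stepI) (auto simp: lbl_vars_def)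
next
  case False
  then have "(enc S, Some (Var 0), avoid_guard cs, enc (fa_succs M S c)) \<in> gDelta A"
    using S set_cs by (auto simp: complement_gva_def fa_succs_notin_letters)
  moreover have "enc (fa_succs M S c) \<in> gKappa A x" for x
    using fa_succs_subset[OF is_fa] by (simp add: complement_gva_def)
  ultimately show ?thesis
    using False guard_vars_avoid_guard[of cs]
    by (intro gva_stepI[where \<gamma> = "[0 \<mapsto> c]"])
       (auto simp: lbl_vars_def guard_sat_avoid_guard restrict_map_def fun_eq_iff)
qed

lemma gva_run_target:
  "gva_run A c w c' \<Longrightarrow> c = (Map.empty, enc S) \<Longrightarrow> S \<subseteq> fQ M
     \<Longrightarrow> snd c' = enc (fa_reach M S w)"
proof (induction arbitrary: S rule: gva_run.induct)
  case (run_refl c)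
  then show ?case by simp
next
  case (run_step c a c' w c'')
  obtain \<sigma>' q' where "c' = (\<sigma>', q')" by (cases c')
  then obtain b where "a = Some b" "c' = (Map.empty, enc (fa_succs M S b))"
    using gva_step_from_empty run_step by blast
  then show ?case
    using run_step.IH fa_succs_subset[OF is_fa] by simp
qed

lemma gva_run_exists:
  "S \<subseteq> fQ M \<Longrightarrow> \<exists>\<sigma>. gva_run A (Map.empty, enc S) w (\<sigma>, enc (fa_reach M S w))"
proof (induction w arbitrary: S)
  case Nil
  show ?case by (auto intro: run_refl)
next
  case (Cons c w)
  obtain \<sigma> where
    "gva_run A (Map.empty, enc (fa_succs M S c)) w (\<sigma>, enc (fa_reach M (fa_succs M S c) w))"
    using Cons.IH[OF fa_succs_subset[OF is_fa]] by blast
  from run_step[OF gva_step_letter[OF Cons.prems] this] show ?case by auto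
qed

lemma gva_lang: "gva_lang A = UNIV - fa_lang M"
proof -
  have Q0: "fQ0 M \<subseteq> fQ M"
    using is_fa by (simp add: is_fa_def)
  have reach: "fa_reach M (fQ0 M) w \<subseteq> fQ M" for w
    using fa_reach_subset[OF is_fa Q0] .
  have "w \<in> gva_lang A \<longleftrightarrow> fa_reach M (fQ0 M) w \<inter> fF M = {}" for w
  proof
    assume "w \<in> gva_lang A"
    then obtain \<sigma> T where T: "T \<subseteq> fQ M" "T \<inter> fF M = {}"
      and run: "gva_run A (Map.empty, enc (fQ0 M)) w (\<sigma>, enc T)"
      unfolding gva_lang_def by (auto simp: complement_gva_def)
    have "enc T = enc (fa_reach M (fQ0 M) w)"
      using gva_run_target[OF run refl Q0] by simp
    with T show "fa_reach M (fQ0 M) w \<inter> fF M = {}"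
      using enc_eq_iff[OF T(1) reach] by simp
  next
    assume "fa_reach M (fQ0 M) w \<inter> fF M = {}"
    then have "enc (fa_reach M (fQ0 M) w) \<in> gF A"
      using reach by (auto simp: complement_gva_def)
    moreover obtain \<sigma> where "gva_run A (Map.empty, enc (fQ0 M)) w (\<sigma>, enc (fa_reach M (fQ0 M) w))"
      using gva_run_exists[OF Q0] by blast
    moreover have "enc (fQ0 M) \<in> gQ0 A"
      by (simp add: complement_gva_def)
    ultimately show "w \<in> gva_lang A"
      unfolding gva_lang_def by blast
  qed
  then show ?thesis
    by (auto simp: fa_lang_iff_reach)
qed

end

theorem mainTheorem2:
  fixes M :: "('s, 'q) fa"
  assumes "infinite (UNIV :: 's set)"
      and "is_fa M"
  shows "\<exists>A :: ('s, nat, nat) gva. is_gva A \<and> gva_lang A = UNIV - fa_lang M"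
proof -
  have "finite (Pow (fQ M))"
    using \<open>is_fa M\<close> by (simp add: is_fa_def)
  then obtain enc :: "'q set \<Rightarrow> nat" where "inj_on enc (Pow (fQ M))"
    using finite_imp_inj_to_nat_seg by meson
  moreover obtain cs where "set cs = fa_letters M"
    using finite_list[OF finite_fa_letters[OF \<open>is_fa M\<close>]] by blast
  ultimately interpret complement_construction M enc cs
    using \<open>is_fa M\<close> by unfold_locales
  show ?thesis
    using is_gva gva_lang by blast
qed

end
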